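(* Let $(X,T)$ be a dynamical system and $\mathcal{F}$ a family admitting a countable base. Then $\mathrm{Tran}_{k\mathcal{F}}(X,T)$ is a $G_\delta$ subset of $X$. Moreover, the following are equivalent: (1) $(X,T)$ is $k\mathcal{F}$-transitive; (2) $\mathrm{Tran}_{k\mathcal{F}}(X,T)$ is a dense $G_\delta$ subset of $X$; (3) $\mathrm{Tran}_{k\mathcal{F}}(X,T)\neq\varnothing$.
   Context: A dynamical system $(X,T)$: $X$ is a compact metric space with more than one point and without isolated points, $T:X\to X$ a continuous surjection. A family is a collection of subsets of $\mathbb{Z}_+$ that is hereditary upward. A countable base of $\mathcal{F}$ is a countable $\mathcal{H}\subset\mathcal{F}$ such that every $F\in\mathcal{F}$ contains some $H\in\mathcal{H}$. The dual family is $k\mathcal{F}=\{F\subset\mathbb{Z}_+:F\cap F'\neq\varnothing\ \forall F'\in\mathcal{F}\}$. "Opene" means open and nonempty. $n_T(x,U)=\{n\in\mathbb{Z}_+:T^nx\in U\}$, $N_T(U,V)=\{n\in\mathbb{Z}_+:U\cap T^{-n}V\neq\varnothing\}$. For a family $\mathcal{G}$, $\mathrm{Tran}_{\mathcal{G}}(X,T)=\{x\in X:n_T(x,U)\in\mathcal{G}\text{ for every opene }U\}$, and $(X,T)$ is $\mathcal{G}$-transitive if $N_T(U,V)\in\mathcal{G}$ for all opene $U,V$. *)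

theory Defs
  imports "HOL-Analysis.Analysis"
begin

definition is_family :: "nat set set \<Rightarrow> bool" where
  "is_family F \<longleftrightarrow> (\<forall>A\<in>F. \<forall>B. A \<subseteq> B \<longrightarrow> B \<in> F)"

definition has_countable_base :: "nat set set \<Rightarrow> bool" where
  "has_countable_base F \<longleftrightarrow>
     (\<exists>H. countable H \<and> H \<subseteq> F \<and> (\<forall>A\<in>F. \<exists>B\<in>H. B \<subseteq> A))"

definition dual_family :: "nat set set \<Rightarrow> nat set set" where
  "dual_family F = {A. \<forall>B\<in>F. A \<inter> B \<noteq> {}}"

definition dyn_system :: "'a::metric_space set \<Rightarrow> ('a \<Rightarrow> 'a) \<Rightarrow> bool" where
  "dyn_system X T \<longleftrightarrow> compact X \<and> (\<exists>x\<in>X. \<exists>y\<in>X. x \<noteq> y) \<and> (\<forall>x\<in>X. x islimpt X) \<and>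
     continuous_on X T \<and> T ` X = X"

definition n_T :: "('a \<Rightarrow> 'a) \<Rightarrow> 'a \<Rightarrow> 'a set \<Rightarrow> nat set" where
  "n_T T x U = {n. (T ^^ n) x \<in> U}"

definition N_T :: "('a \<Rightarrow> 'a) \<Rightarrow> 'a set \<Rightarrow> 'a set \<Rightarrow> nat set" where
  "N_T T U V = {n. U \<inter> (T ^^ n) -` V \<noteq> {}}"

definition Tran :: "nat set set \<Rightarrow> 'a::metric_space set \<Rightarrow> ('a \<Rightarrow> 'a) \<Rightarrow> 'a set" where
  "Tran G X T = {x\<in>X. \<forall>U. openin (top_of_set X) U \<and> U \<noteq> {} \<longrightarrow> n_T T x U \<in> G}"

definition transitive_wrt :: "nat set set \<Rightarrow> 'a::metric_space set \<Rightarrow> ('a \<Rightarrow> 'a) \<Rightarrow> bool" where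
  "transitive_wrt G X T \<longleftrightarrow> (\<forall>U V. openin (top_of_set X) U \<and> U \<noteq> {} \<and>
      openin (top_of_set X) V \<and> V \<noteq> {} \<longrightarrow> N_T T U V \<in> G)"

end

theory Submission
  imports Defs
begin

text \<open>Choose a countable base \<open>\<H>\<close> of \<open>F\<close> and a countable family \<open>\<B>\<close> of opene sets such
  that every opene set contains a member of \<open>\<B>\<close>. Then \<open>x \<in> Tran\<^bsub>kF\<^esub>\<close> iff for all
  \<open>H \<in> \<H>\<close> and \<open>B \<in> \<B>\<close> some \<open>n \<in> H\<close> sends \<open>x\<close> into \<open>B\<close>. Each of these countably many
  conditions defines an open set, so \<open>Tran\<^bsub>kF\<^esub>\<close> is \<open>G\<^sub>\<delta>\<close>; under \<open>kF\<close>-transitivity each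
  of them is dense, and Baire's theorem makes \<open>Tran\<^bsub>kF\<^esub>\<close> dense. Conversely a point of
  \<open>Tran\<^bsub>kF\<^esub>\<close> in \<open>U\<close> witnesses \<open>N(U,V) \<in> kF\<close>. Finally \<open>Tran\<^bsub>kF\<^esub>\<close> is forward invariant
  and each of its points visits every opene set, so a single such point has a dense orbit
  inside \<open>Tran\<^bsub>kF\<^esub>\<close>.\<close>

lemma funpow_image_subset: "f ` S \<subseteq> S \<Longrightarrow> (f ^^ n) ` S \<subseteq> S"
  by (induction n) (auto simp: funpow_swap1[symmetric])

lemma funpow_image_eq: "f ` S = S \<Longrightarrow> (f ^^ n) ` S = S"
  by (induction n) (simp, metis funpow.simps(2) image_comp)

lemma continuous_on_funpow:
  assumes "continuous_on S f" "f ` S \<subseteq> S"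
  shows "continuous_on S (f ^^ n)"
proof (induction n)
  case (Suc n)
  then show ?case
    unfolding funpow_Suc_right
    by (intro continuous_on_compose assms(1) continuous_on_subset[OF Suc assms(2)])
qed (simp add: continuous_on_id)

lemma openin_funpow_preimage:
  assumes "continuous_on X T" "T ` X \<subseteq> X" "openin (top_of_set X) U"
  shows "openin (top_of_set X) (X \<inter> (T ^^ n) -` U)"
  using funpow_image_subset[OF assms(2)]
  by (intro continuous_openin_preimage[OF continuous_on_funpow[OF assms(1,2)] _ assms(3)]) blast

lemma compact_countable_pi_base:
  fixes X :: "'a::metric_space set"
  assumes "compact X"
  obtains \<B> where "countable \<B>" "\<And>B. B \<in> \<B> \<Longrightarrow> openin (top_of_set X) B \<and> B \<noteq> {}"
    "\<And>U. openin (top_of_set X) U \<Longrightarrow> U \<noteq> {} \<Longrightarrow> \<exists>B\<in>\<B>. B \<subseteq> U"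
proof -
  have "\<forall>\<epsilon>>0. \<exists>k. finite k \<and> k \<subseteq> X \<and> X \<subseteq> (\<Union>x\<in>k. ball x \<epsilon>)"
    by (rule seq_compact_imp_totally_bounded) (use assms compact_imp_seq_compact in auto)
  then have "\<forall>k::nat. \<exists>C. finite C \<and> C \<subseteq> X \<and> X \<subseteq> (\<Union>x\<in>C. ball x (1 / Suc k))"
    by simp
  then obtain C where C: "\<And>k. finite (C k) \<and> C k \<subseteq> X \<and> X \<subseteq> (\<Union>x\<in>C k. ball x (1 / Suc k))"
    by metis
  define \<B> where "\<B> = (\<Union>k. (\<lambda>c. X \<inter> ball c (1 / Suc k)) ` C k)"
  have "countable \<B>"
    unfolding \<B>_def using C by (intro countable_UN) (auto intro: countable_finite)
  moreover have "openin (top_of_set X) B \<and> B \<noteq> {}" if "B \<in> \<B>" for B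
    using that C unfolding \<B>_def by (force simp: openin_open_Int)
  moreover have "\<exists>B\<in>\<B>. B \<subseteq> U" if U: "openin (top_of_set X) U" "U \<noteq> {}" for U
  proof -
    obtain x where x: "x \<in> U" using U by auto
    then have "x \<in> X" using U openin_subset by fastforce
    obtain e where e: "e > 0" "\<And>y. y \<in> X \<Longrightarrow> dist y x < e \<Longrightarrow> y \<in> U"
      using U(1) x by (force simp: openin_euclidean_subtopology_iff)
    obtain k :: nat where k: "1 / Suc k < e / 2"
      using reals_Archimedean[of "e / 2"] e by (auto simp: inverse_eq_divide)
    obtain c where c: "c \<in> C k" "dist c x < 1 / Suc k"
      using C[of k] \<open>x \<in> X\<close> by (force simp: dist_commute)
    have "X \<inter> ball c (1 / Suc k) \<subseteq> U"
    proof
      fix y assume y: "y \<in> X \<inter> ball c (1 / Suc k)"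
      then have "dist y c < 1 / Suc k" by (simp add: dist_commute)
      then have "dist y x < e" using dist_triangle[of y x c] c k by linarith
      then show "y \<in> U" using e y by auto
    qed
    then show ?thesis using c unfolding \<B>_def by blast
  qed
  ultimately show ?thesis using that by blast
qed

lemma has_countable_baseE:
  assumes "has_countable_base F"
  obtains \<H> where "countable \<H>" "\<H> \<subseteq> F" "\<And>A. A \<in> F \<Longrightarrow> \<exists>H\<in>\<H>. H \<subseteq> A"
  using assms unfolding has_countable_base_def by (elim exE conjE) (rule that, assumption+, blast)

lemma is_family_dual_family: "is_family (dual_family F)"
  by (auto simp: is_family_def dual_family_def)

lemma closure_of_eq_iff_intersects_openin:
  "(top_of_set X) closure_of S = X \<longleftrightarrow> (\<forall>U. openin (top_of_set X) U \<and> U \<noteq> {} \<longrightarrow> S \<inter> U \<noteq> {})"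
  using dense_intersects_open[of "top_of_set X" S] by simp

definition visit_set :: "'a set \<Rightarrow> ('a \<Rightarrow> 'a) \<Rightarrow> nat set \<Rightarrow> 'a set \<Rightarrow> 'a set" where
  "visit_set X T H B = {x \<in> X. n_T T x B \<inter> H \<noteq> {}}"

lemma openin_visit_set:
  assumes "continuous_on X T" "T ` X \<subseteq> X" "openin (top_of_set X) B"
  shows "openin (top_of_set X) (visit_set X T H B)"
proof -
  have "visit_set X T H B = (\<Union>n\<in>H. X \<inter> (T ^^ n) -` B)"
    by (auto simp: visit_set_def n_T_def)
  then show ?thesis
    using openin_funpow_preimage[OF assms] by (metis (mono_tags, lifting) imageE openin_Union)
qed

lemma n_T_mono: "U \<subseteq> V \<Longrightarrow> n_T T x U \<subseteq> n_T T x V"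
  by (auto simp: n_T_def)

lemma Tran_dual_family_eq:
  assumes "\<H> \<subseteq> F" "\<And>A. A \<in> F \<Longrightarrow> \<exists>H\<in>\<H>. H \<subseteq> A"
    and "\<And>B. B \<in> \<B> \<Longrightarrow> openin (top_of_set X) B \<and> B \<noteq> {}"
    and "\<And>U. openin (top_of_set X) U \<Longrightarrow> U \<noteq> {} \<Longrightarrow> \<exists>B\<in>\<B>. B \<subseteq> U"
  shows "Tran (dual_family F) X T = {x \<in> X. \<forall>H\<in>\<H>. \<forall>B\<in>\<B>. n_T T x B \<inter> H \<noteq> {}}"
  unfolding Tran_def
proof (intro Collect_cong conj_cong refl)
  fix x
  show "(\<forall>U. openin (top_of_set X) U \<and> U \<noteq> {} \<longrightarrow> n_T T x U \<in> dual_family F)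
      \<longleftrightarrow> (\<forall>H\<in>\<H>. \<forall>B\<in>\<B>. n_T T x B \<inter> H \<noteq> {})"
  proof
    assume Tr: "\<forall>U. openin (top_of_set X) U \<and> U \<noteq> {} \<longrightarrow> n_T T x U \<in> dual_family F"
    show "\<forall>H\<in>\<H>. \<forall>B\<in>\<B>. n_T T x B \<inter> H \<noteq> {}"
    proof (intro ballI)
      fix H B assume "H \<in> \<H>" "B \<in> \<B>"
      then have "n_T T x B \<in> dual_family F" using Tr assms(3) by simp
      moreover have "H \<in> F" using assms(1) \<open>H \<in> \<H>\<close> by blast
      ultimately show "n_T T x B \<inter> H \<noteq> {}" by (simp add: dual_family_def)
    qed
  next
    assume visits: "\<forall>H\<in>\<H>. \<forall>B\<in>\<B>. n_T T x B \<inter> H \<noteq> {}"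
    show "\<forall>U. openin (top_of_set X) U \<and> U \<noteq> {} \<longrightarrow> n_T T x U \<in> dual_family F"
    proof (intro allI impI)
      fix U assume "openin (top_of_set X) U \<and> U \<noteq> {}"
      then obtain B where "B \<in> \<B>" "B \<subseteq> U" using assms(4) by blast
      show "n_T T x U \<in> dual_family F"
        unfolding dual_family_def
      proof (intro CollectI ballI)
        fix A assume "A \<in> F"
        then obtain H where "H \<in> \<H>" "H \<subseteq> A" using assms(2) by blast
        then have "n_T T x B \<inter> H \<noteq> {}" using visits \<open>B \<in> \<B>\<close> by simp
        then show "n_T T x U \<inter> A \<noteq> {}"
          using n_T_mono[OF \<open>B \<subseteq> U\<close>] \<open>H \<subseteq> A\<close> by blast
      qed
    qed
  qed
qed

lemma Tran_dual_family_eq_Inter_visit_sets: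
  assumes "\<H> \<subseteq> F" "\<And>A. A \<in> F \<Longrightarrow> \<exists>H\<in>\<H>. H \<subseteq> A"
    and "\<And>B. B \<in> \<B> \<Longrightarrow> openin (top_of_set X) B \<and> B \<noteq> {}"
    and "\<And>U. openin (top_of_set X) U \<Longrightarrow> U \<noteq> {} \<Longrightarrow> \<exists>B\<in>\<B>. B \<subseteq> U"
  shows "Tran (dual_family F) X T = \<Inter> (insert X ((\<lambda>(H, B). visit_set X T H B) ` (\<H> \<times> \<B>)))"
  by (subst Tran_dual_family_eq[OF assms]) (auto simp: visit_set_def)

lemma gdelta_in_Tran_dual_family:
  fixes X :: "'a::metric_space set"
  assumes "compact X" "continuous_on X T" "T ` X \<subseteq> X" "has_countable_base F"
  shows "gdelta_in (top_of_set X) (Tran (dual_family F) X T)"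
proof -
  obtain \<H> where \<H>: "countable \<H>" "\<H> \<subseteq> F" "\<And>A. A \<in> F \<Longrightarrow> \<exists>H\<in>\<H>. H \<subseteq> A"
    using has_countable_baseE[OF assms(4)] by metis
  obtain \<B> where \<B>: "countable \<B>" "\<And>B. B \<in> \<B> \<Longrightarrow> openin (top_of_set X) B \<and> B \<noteq> {}"
    "\<And>U. openin (top_of_set X) U \<Longrightarrow> U \<noteq> {} \<Longrightarrow> \<exists>B\<in>\<B>. B \<subseteq> U"
    using compact_countable_pi_base[OF assms(1)] by metis
  have Tr: "Tran (dual_family F) X T = \<Inter> (insert X ((\<lambda>(H, B). visit_set X T H B) ` (\<H> \<times> \<B>)))"
    by (rule Tran_dual_family_eq_Inter_visit_sets[OF \<H>(2,3) \<B>(2,3)])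
  show ?thesis
    unfolding Tr
    using \<H>(1) \<B>(1) \<B>(2) openin_visit_set[OF assms(2,3)]
    by (intro gdelta_in_Inter open_imp_gdelta_in) auto
qed

lemma dense_Tran_dual_family_if_transitive:
  fixes X :: "'a::metric_space set"
  assumes "compact X" "continuous_on X T" "T ` X \<subseteq> X" "has_countable_base F"
    and "transitive_wrt (dual_family F) X T"
  shows "(top_of_set X) closure_of (Tran (dual_family F) X T) = X"
proof -
  obtain \<H> where \<H>: "countable \<H>" "\<H> \<subseteq> F" "\<And>A. A \<in> F \<Longrightarrow> \<exists>H\<in>\<H>. H \<subseteq> A"
    using has_countable_baseE[OF assms(4)] by metis
  obtain \<B> where \<B>: "countable \<B>" "\<And>B. B \<in> \<B> \<Longrightarrow> openin (top_of_set X) B \<and> B \<noteq> {}"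
    "\<And>U. openin (top_of_set X) U \<Longrightarrow> U \<noteq> {} \<Longrightarrow> \<exists>B\<in>\<B>. B \<subseteq> U"
    using compact_countable_pi_base[OF assms(1)] by metis
  have dense_visit_set: "(top_of_set X) closure_of (visit_set X T H B) = X" if "H \<in> \<H>" "B \<in> \<B>" for H B
    unfolding closure_of_eq_iff_intersects_openin
  proof (intro allI impI)
    fix V assume V: "openin (top_of_set X) V \<and> V \<noteq> {}"
    then have "N_T T V B \<in> dual_family F"
      using assms(5) \<B>(2)[OF that(2)] unfolding transitive_wrt_def by blast
    moreover have "H \<in> F" using \<H>(2) that(1) by blast
    ultimately have "N_T T V B \<inter> H \<noteq> {}" by (simp add: dual_family_def)
    then obtain n y where "n \<in> H" "y \<in> V" "(T ^^ n) y \<in> B" by (auto simp: N_T_def)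
    moreover have "V \<subseteq> X" using V openin_imp_subset by blast
    ultimately show "visit_set X T H B \<inter> V \<noteq> {}" by (auto simp: visit_set_def n_T_def)
  qed
  define \<G> where "\<G> = insert X ((\<lambda>(H, B). visit_set X T H B) ` (\<H> \<times> \<B>))"
  have "compact_space (top_of_set X)" by (simp add: compact_space_subtopology assms(1))
  then have "locally_compact_space (top_of_set X) \<and> regular_space (top_of_set X)"
    using compact_imp_locally_compact_space regular_space_subtopology[OF regular_space_euclidean]
    by blast
  then have "(top_of_set X) closure_of \<Inter>\<G> = topspace (top_of_set X)"
  proof (rule Baire_category[OF disjI2])
    show "countable \<G>" using \<H>(1) \<B>(1) by (simp add: \<G>_def)
    fix S assume "S \<in> \<G>"
    then show "openin (top_of_set X) S \<and> (top_of_set X) closure_of S = topspace (top_of_set X)"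
      using dense_visit_set openin_visit_set[OF assms(2,3)] \<B>(2)
      by (auto simp: \<G>_def closure_of_topspace[of "top_of_set X", simplified])
  qed
  then show ?thesis
    using Tran_dual_family_eq_Inter_visit_sets[OF \<H>(2,3) \<B>(2,3)] by (simp add: \<G>_def)
qed

lemma transitive_wrt_if_dense_Tran:
  assumes "is_family G" "(top_of_set X) closure_of (Tran G X T) = X"
  shows "transitive_wrt G X T"
  unfolding transitive_wrt_def
proof (intro allI impI)
  fix U V assume UV: "openin (top_of_set X) U \<and> U \<noteq> {} \<and> openin (top_of_set X) V \<and> V \<noteq> {}"
  then obtain x where x: "x \<in> Tran G X T" "x \<in> U"
    using assms(2) unfolding closure_of_eq_iff_intersects_openin by blast
  then have "n_T T x V \<in> G" using UV by (simp add: Tran_def)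
  moreover have "n_T T x V \<subseteq> N_T T U V" using x(2) by (auto simp: n_T_def N_T_def)
  ultimately show "N_T T U V \<in> G" using assms(1) by (auto simp: is_family_def)
qed

lemma funpow_in_Tran:
  assumes "continuous_on X T" "T ` X = X" "x \<in> Tran G X T"
  shows "(T ^^ m) x \<in> Tran G X T"
proof -
  have "x \<in> X" using assms(3) by (simp add: Tran_def)
  have maps_to: "(T ^^ n) ` X = X" for n by (rule funpow_image_eq[OF assms(2)])
  have "n_T T ((T ^^ m) x) U \<in> G" if U: "openin (top_of_set X) U" "U \<noteq> {}" for U
  proof -
    let ?V = "X \<inter> (T ^^ m) -` U"
    \<comment> \<open>visiting \<open>U\<close> from \<open>T\<^sup>m x\<close> is visiting \<open>?V\<close> from \<open>x\<close>; surjectivity makes \<open>?V\<close> nonempty\<close>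
    have "(T ^^ n) ((T ^^ m) x) = (T ^^ m) ((T ^^ n) x)" for n
      by (metis add.commute comp_apply funpow_add)
    moreover have "(T ^^ n) x \<in> X" for n using maps_to \<open>x \<in> X\<close> by blast
    ultimately have "n_T T ((T ^^ m) x) U = n_T T x ?V" by (simp add: n_T_def)
    moreover have "openin (top_of_set X) ?V"
      using openin_funpow_preimage[OF assms(1) _ U(1)] assms(2) by simp
    moreover have "?V \<noteq> {}"
    proof -
      obtain u where "u \<in> U" using U(2) by blast
      moreover have "u \<in> (T ^^ m) ` X" using \<open>u \<in> U\<close> openin_imp_subset[OF U(1)] maps_to by blast
      ultimately show ?thesis by blast
    qed
    ultimately show ?thesis using assms(3) by (simp add: Tran_def)
  qed
  moreover have "(T ^^ m) x \<in> X" using maps_to \<open>x \<in> X\<close> by blast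
  ultimately show ?thesis by (simp add: Tran_def)
qed

lemma dense_Tran_dual_family_if_nonempty:
  assumes "continuous_on X T" "T ` X = X" "Tran (dual_family F) X T \<noteq> {}"
  shows "(top_of_set X) closure_of (Tran (dual_family F) X T) = X"
proof (cases "F = {}")
  case True
  then have "Tran (dual_family F) X T = X" by (auto simp: Tran_def dual_family_def)
  then show ?thesis using closure_of_topspace[of "top_of_set X"] by simp
next
  case False
  then obtain A where "A \<in> F" by blast
  obtain x where x: "x \<in> Tran (dual_family F) X T" using assms(3) by blast
  show ?thesis unfolding closure_of_eq_iff_intersects_openin
  proof (intro allI impI)
    fix U assume "openin (top_of_set X) U \<and> U \<noteq> {}"
    then have "n_T T x U \<inter> A \<noteq> {}"
      using x \<open>A \<in> F\<close> by (auto simp: Tran_def dual_family_def)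
    then obtain n where "(T ^^ n) x \<in> U" by (auto simp: n_T_def)
    then show "Tran (dual_family F) X T \<inter> U \<noteq> {}"
      using funpow_in_Tran[OF assms(1,2) x] by blast
  qed
qed

theorem proposition3p3:
  fixes X :: "'a::metric_space set" and T :: "'a \<Rightarrow> 'a" and F :: "nat set set"
  assumes "dyn_system X T" and "is_family F" and "has_countable_base F"
  shows "gdelta_in (top_of_set X) (Tran (dual_family F) X T)
       \<and> (transitive_wrt (dual_family F) X T
            \<longleftrightarrow> (gdelta_in (top_of_set X) (Tran (dual_family F) X T) \<and>
                 (top_of_set X) closure_of (Tran (dual_family F) X T) = X))
       \<and> ((gdelta_in (top_of_set X) (Tran (dual_family F) X T) \<and>
                 (top_of_set X) closure_of (Tran (dual_family F) X T) = X)
            \<longleftrightarrow> Tran (dual_family F) X T \<noteq> {})"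
proof -
  have X: "compact X" "continuous_on X T" "T ` X = X" "X \<noteq> {}"
    using assms(1) unfolding dyn_system_def by blast+
  then have "T ` X \<subseteq> X" by simp
  note gdelta = gdelta_in_Tran_dual_family[OF X(1,2) this assms(3)]
    and dense_if_transitive = dense_Tran_dual_family_if_transitive[OF X(1,2) \<open>T ` X \<subseteq> X\<close> assms(3)]
    and transitive_if_dense = transitive_wrt_if_dense_Tran[OF is_family_dual_family]
    and dense_if_nonempty = dense_Tran_dual_family_if_nonempty[OF X(2,3)]
  have nonempty_if_dense: "Tran (dual_family F) X T \<noteq> {}"
    if "(top_of_set X) closure_of (Tran (dual_family F) X T) = X"
    using that X(4) by (metis closure_of_empty)
  show ?thesis
    using gdelta dense_if_transitive transitive_if_dense dense_if_nonempty nonempty_if_dense by blast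
qed

end
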